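(* Chekanov tori are not Hamiltonian stationary: if $\gamma\subset\mathbb{C}$ is a smooth simple closed curve contained in an open half-plane whose boundary line passes through the origin (so $\gamma$ avoids the origin), then the twisted torus $L_\gamma$ is not Hamiltonian stationary.
   Context: Identify $\mathbb{C}^2\cong\mathbb{R}^4$ with its Euclidean metric and standard complex structure $J$ (multiplication by $i$). For a smooth regular simple closed curve $\gamma:\mathbb{R}/2\pi\mathbb{Z}\to\mathbb{C}\setminus\{0\}$, the twisted torus is $L_\gamma=\left\{\tfrac{1}{\sqrt2}\left(\gamma(\beta)e^{i\alpha},\gamma(\beta)e^{-i\alpha}\right):\alpha,\beta\in[0,2\pi)\right\}\subset\mathbb{C}^2$; when $\gamma$ lies in an open half-plane (bounded by a line through $0$) it is called a Chekanov torus. Let $g$ be the induced metric and $H$ the mean curvature vector (trace of the second fundamental form). $L_\gamma$ is Hamiltonian stationary if it is a critical point of area under all variations with variation field $J\nabla h$, $h\in C^\infty(L_\gamma)$; equivalently (Oh) $\mathrm{div}_g(JH)=0$. *)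

theory Defs
  imports "HOL-Analysis.Analysis"
begin

fun Ck :: "nat \<Rightarrow> ('a::euclidean_space \<Rightarrow> 'b::real_normed_vector) \<Rightarrow> bool" where
  "Ck 0 f = continuous_on UNIV f"
| "Ck (Suc k) f = ((\<forall>x. f differentiable (at x)) \<and>
                    (\<forall>v. Ck k (\<lambda>x. frechet_derivative f (at x) v)))"

definition smooth_map :: "('a::euclidean_space \<Rightarrow> 'b::real_normed_vector) \<Rightarrow> bool" where
  "smooth_map f \<longleftrightarrow> (\<forall>k. Ck k f)"

definition smooth_regular_simple_closed_curve :: "(real \<Rightarrow> complex) \<Rightarrow> bool" where
  "smooth_regular_simple_closed_curve \<gamma> \<longleftrightarrow>
     (\<forall>t. \<gamma> (t + 2*pi) = \<gamma> t) \<and>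
     smooth_map \<gamma> \<and>
     (\<forall>t. vector_derivative \<gamma> (at t) \<noteq> 0) \<and>
     inj_on \<gamma> {0..<2*pi} \<and>
     (\<forall>t. \<gamma> t \<noteq> 0)"

definition in_open_half_plane :: "(real \<Rightarrow> complex) \<Rightarrow> bool" where
  "in_open_half_plane \<gamma> \<longleftrightarrow> (\<exists>u::complex. u \<noteq> 0 \<and> (\<forall>t. Re (\<gamma> t * cnj u) > 0))"

(* parametrisation (alpha,beta) \<mapsto> (1/sqrt 2)(gamma(beta) e^{i alpha}, gamma(beta) e^{-i alpha}) of L_gamma
   in C^2 = complex \<times> complex (Euclidean inner product of R^4) *)
definition twisted_torus :: "(real \<Rightarrow> complex) \<Rightarrow> real \<times> real \<Rightarrow> complex \<times> complex" where
  "twisted_torus \<gamma> p = scaleR (1 / sqrt 2) (\<gamma> (snd p) * cis (fst p), \<gamma> (snd p) * cis (- fst p))"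

definition cJ :: "complex \<times> complex \<Rightarrow> complex \<times> complex" where
  "cJ z = (\<i> * fst z, \<i> * snd z)"

definition pd1 :: "(real \<times> real \<Rightarrow> 'b::real_normed_vector) \<Rightarrow> real \<times> real \<Rightarrow> 'b" where
  "pd1 f p = frechet_derivative f (at p) (1, 0)"
definition pd2 :: "(real \<times> real \<Rightarrow> 'b::real_normed_vector) \<Rightarrow> real \<times> real \<Rightarrow> 'b" where
  "pd2 f p = frechet_derivative f (at p) (0, 1)"

(* coefficients of the induced metric g = E da^2 + 2 M da db + G db^2 *)
definition gE :: "(real \<times> real \<Rightarrow> complex \<times> complex) \<Rightarrow> real \<times> real \<Rightarrow> real" where
  "gE X p = pd1 X p \<bullet> pd1 X p"
definition gM :: "(real \<times> real \<Rightarrow> complex \<times> complex) \<Rightarrow> real \<times> real \<Rightarrow> real" where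
  "gM X p = pd1 X p \<bullet> pd2 X p"
definition gG :: "(real \<times> real \<Rightarrow> complex \<times> complex) \<Rightarrow> real \<times> real \<Rightarrow> real" where
  "gG X p = pd2 X p \<bullet> pd2 X p"

definition torus_area :: "(real \<times> real \<Rightarrow> complex \<times> complex) \<Rightarrow> real" where
  "torus_area X = integral (cbox (0, 0) (2*pi, 2*pi))
       (\<lambda>p. sqrt (gE X p * gG X p - (gM X p)\<^sup>2))"

(* the tangent vector dX(grad_g h) in C^2, grad_g the gradient w.r.t. the induced metric *)
definition grad_push :: "(real \<times> real \<Rightarrow> complex \<times> complex) \<Rightarrow> (real \<times> real \<Rightarrow> real)
                         \<Rightarrow> real \<times> real \<Rightarrow> complex \<times> complex" where
  "grad_push X h p =
     (let E = gE X p; M = gM X p; G = gG X p; D = E * G - M\<^sup>2;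
          ha = pd1 h p; hb = pd2 h p
      in ((G * ha - M * hb) / D) *\<^sub>R pd1 X p + ((E * hb - M * ha) / D) *\<^sub>R pd2 X p)"

definition periodic2 :: "(real \<times> real \<Rightarrow> 'b) \<Rightarrow> bool" where
  "periodic2 h \<longleftrightarrow> (\<forall>a b. h (a + 2*pi, b) = h (a, b) \<and> h (a, b + 2*pi) = h (a, b))"

(* Hamiltonian stationary: critical point of area under every variation whose
   variation field is J grad h, h smooth on the torus; the variation used is X + t J grad h *)
definition hamiltonian_stationary :: "(real \<times> real \<Rightarrow> complex \<times> complex) \<Rightarrow> bool" where
  "hamiltonian_stationary X \<longleftrightarrow>
     (\<forall>h :: real \<times> real \<Rightarrow> real. smooth_map h \<and> periodic2 h \<longrightarrow>
        ((\<lambda>t. torus_area (\<lambda>p. X p + t *\<^sub>R cJ (grad_push X h p))) has_real_derivative 0) (at 0))"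

end

theory Submission
  imports Defs
begin

(* Since gamma lies in a half-plane, it has a smooth periodic argument theta.  The Hamiltonian
   h(alpha, beta) = theta(beta) generates the variation gamma + t V, V = i theta' gamma' / |gamma'|^2,
   which keeps L_gamma a twisted torus.  The induced metric is |gamma|^2 dalpha^2 + |gamma'|^2 dbeta^2,
   so the area is 2 pi times the integral of |gamma| |gamma'|, and its first variation is 2 pi times
   the integral of c' - 2 g, where c (cos_angle) is the cosine of the angle between gamma and gamma'
   and g (angular_term) = Im(conj(gamma) gamma')^2 / (|gamma|^3 |gamma'|) >= 0.  As c is periodic,
   the first variation is -4 pi times the integral of g, and g > 0 at a critical point of |gamma|,
   where gamma is orthogonal to gamma'. *)

section \<open>Smooth curves\<close>

(* Ck for curves, with the derivative carried as a witness: closure under products and inverses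
   then becomes a plain induction. *)
fun curve_Ck :: "nat \<Rightarrow> (real \<Rightarrow> 'a::real_normed_vector) \<Rightarrow> bool" where
  "curve_Ck 0 f = continuous_on UNIV f"
| "curve_Ck (Suc n) f = (\<exists>f'. (\<forall>x. (f has_vector_derivative f' x) (at x)) \<and> curve_Ck n f')"

definition smooth_curve :: "(real \<Rightarrow> 'a::real_normed_vector) \<Rightarrow> bool" where
  "smooth_curve f \<longleftrightarrow> (\<forall>n. curve_Ck n f)"

lemma curve_Ck_imp_continuous: "curve_Ck n f \<Longrightarrow> continuous_on UNIV f"
  by (cases n) (auto intro: continuous_at_imp_continuous_on has_vector_derivative_continuous)

lemma curve_Ck_Suc_imp_curve_Ck: "curve_Ck (Suc n) f \<Longrightarrow> curve_Ck n f"
proof (induction n arbitrary: f)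
  case 0
  then show ?case using curve_Ck_imp_continuous by fastforce
next
  case (Suc n)
  then show ?case by auto
qed

lemma curve_Ck_const: "curve_Ck n (\<lambda>x. c)"
  by (induction n arbitrary: c) (auto intro!: exI[of _ "\<lambda>x. 0"] derivative_eq_intros)

lemma curve_Ck_add: "curve_Ck n f \<Longrightarrow> curve_Ck n g \<Longrightarrow> curve_Ck n (\<lambda>x. f x + g x)"
proof (induction n arbitrary: f g)
  case 0
  then show ?case by (auto intro: continuous_intros)
next
  case (Suc n)
  then obtain f' g' where "\<forall>x. (f has_vector_derivative f' x) (at x)" "curve_Ck n f'"
    "\<forall>x. (g has_vector_derivative g' x) (at x)" "curve_Ck n g'" by auto
  then show ?case
    using Suc.IH by (auto intro!: exI[of _ "\<lambda>x. f' x + g' x"] derivative_eq_intros)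
qed

lemma curve_Ck_mult:
  fixes f g :: "real \<Rightarrow> 'a::real_normed_algebra"
  shows "curve_Ck n f \<Longrightarrow> curve_Ck n g \<Longrightarrow> curve_Ck n (\<lambda>x. f x * g x)"
proof (induction n arbitrary: f g)
  case 0
  then show ?case by (auto intro: continuous_intros)
next
  case (Suc n)
  then obtain f' g' where f': "\<forall>x. (f has_vector_derivative f' x) (at x)" "curve_Ck n f'"
    and g': "\<forall>x. (g has_vector_derivative g' x) (at x)" "curve_Ck n g'" by auto
  have "curve_Ck n f" "curve_Ck n g"
    using Suc.prems curve_Ck_Suc_imp_curve_Ck by auto
  then have "curve_Ck n (\<lambda>x. f x * g' x + f' x * g x)"
    using Suc.IH f' g' curve_Ck_add by blast
  moreover have "\<forall>x. ((\<lambda>x. f x * g x) has_vector_derivative f x * g' x + f' x * g x) (at x)"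
    using f' g' by (auto intro: has_vector_derivative_mult)
  ultimately show ?case by auto
qed

lemma curve_Ck_linear:
  assumes L: "bounded_linear L"
  shows "curve_Ck n f \<Longrightarrow> curve_Ck n (\<lambda>x. L (f x))"
proof (induction n arbitrary: f)
  case 0
  then show ?case
    using L by (auto intro: continuous_on_compose2[of UNIV L] linear_continuous_on)
next
  case (Suc n)
  then obtain f' where f': "\<forall>x. (f has_vector_derivative f' x) (at x)" "curve_Ck n f'" by auto
  then have "\<forall>x. ((\<lambda>x. L (f x)) has_vector_derivative L (f' x)) (at x)"
    using L by (auto intro: bounded_linear.has_vector_derivative)
  then show ?case using Suc.IH f' by auto
qed

lemma curve_Ck_inverse:
  fixes f :: "real \<Rightarrow> 'a::real_normed_field"
  shows "(\<And>x. f x \<noteq> 0) \<Longrightarrow> curve_Ck n f \<Longrightarrow> curve_Ck n (\<lambda>x. inverse (f x))"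
proof (induction n arbitrary: f)
  case 0
  then show ?case by (auto intro: continuous_intros)
next
  case (Suc n)
  obtain f' where f': "\<forall>x. (f has_vector_derivative f' x) (at x)" "curve_Ck n f'"
    using Suc.prems(2) by auto
  have "((\<lambda>x. inverse (f x)) has_vector_derivative f' x * - (inverse (f x) * inverse (f x))) (at x)"
    for x
  proof -
    have "(inverse has_field_derivative - (inverse (f x) * inverse (f x))) (at (f x))"
      using Suc.prems(1) by (auto intro!: derivative_eq_intros simp: power2_eq_square)
    from field_vector_diff_chain_at[OF f'(1)[rule_format] this] show ?thesis
      by (simp add: o_def)
  qed
  moreover have "curve_Ck n (\<lambda>x. f' x * - (inverse (f x) * inverse (f x)))"
  proof -
    have "curve_Ck n (\<lambda>x. inverse (f x))"
      using Suc curve_Ck_Suc_imp_curve_Ck by blast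
    then have "curve_Ck n (\<lambda>x. - (inverse (f x) * inverse (f x)))"
      using curve_Ck_mult curve_Ck_linear[OF bounded_linear_minus[OF bounded_linear_ident]]
      by fastforce
    then show ?thesis using curve_Ck_mult f' by blast
  qed
  ultimately show ?case
    unfolding curve_Ck.simps by (intro exI[of _ "\<lambda>x. f' x * - (inverse (f x) * inverse (f x))"]) blast
qed

lemma smooth_curve_continuous: "smooth_curve f \<Longrightarrow> continuous_on UNIV f"
  unfolding smooth_curve_def using curve_Ck_imp_continuous by blast

lemma smooth_curve_derivative:
  assumes "smooth_curve f" and "\<And>x. (f has_vector_derivative f' x) (at x)"
  shows "smooth_curve f'"
  unfolding smooth_curve_def
proof
  fix n
  obtain g where "\<forall>x. (f has_vector_derivative g x) (at x)" "curve_Ck n g"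
    using assms(1) curve_Ck.simps(2) unfolding smooth_curve_def by blast
  moreover have "g = f'" if "\<forall>x. (f has_vector_derivative g x) (at x)"
    using that assms(2) vector_derivative_unique_at by blast
  ultimately show "curve_Ck n f'" by blast
qed

lemma smooth_curve_has_derivative:
  assumes "smooth_curve f"
  obtains f' where "\<And>x. (f has_vector_derivative f' x) (at x)" and "smooth_curve f'"
  using assms smooth_curve_derivative curve_Ck.simps(2) unfolding smooth_curve_def by metis

lemma smooth_curve_antiderivative:
  assumes "\<And>x. (f has_vector_derivative f' x) (at x)" and "smooth_curve f'"
  shows "smooth_curve f"
  unfolding smooth_curve_def
proof
  fix n show "curve_Ck n f"
    using assms by (cases n)
      (auto simp: smooth_curve_def intro: continuous_at_imp_continuous_on
        has_vector_derivative_continuous)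
qed

lemma smooth_curve_const: "smooth_curve (\<lambda>x. c)"
  unfolding smooth_curve_def using curve_Ck_const by blast

lemma smooth_curve_mult:
  fixes f g :: "real \<Rightarrow> 'a::real_normed_algebra"
  shows "smooth_curve f \<Longrightarrow> smooth_curve g \<Longrightarrow> smooth_curve (\<lambda>x. f x * g x)"
  unfolding smooth_curve_def using curve_Ck_mult by blast

lemma smooth_curve_linear: "bounded_linear L \<Longrightarrow> smooth_curve f \<Longrightarrow> smooth_curve (\<lambda>x. L (f x))"
  unfolding smooth_curve_def using curve_Ck_linear by blast

lemma smooth_curve_inverse:
  fixes f :: "real \<Rightarrow> 'a::real_normed_field"
  shows "(\<And>x. f x \<noteq> 0) \<Longrightarrow> smooth_curve f \<Longrightarrow> smooth_curve (\<lambda>x. inverse (f x))"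
  unfolding smooth_curve_def using curve_Ck_inverse by blast

lemma Ck_imp_curve_Ck:
  fixes f :: "real \<Rightarrow> 'a::real_normed_vector"
  shows "Ck n f \<Longrightarrow> curve_Ck n f"
proof (induction n arbitrary: f)
  case 0
  then show ?case by simp
next
  case (Suc n)
  then have d: "\<forall>x. f differentiable (at x)"
    and c: "Ck n (\<lambda>x. frechet_derivative f (at x) 1)" by auto
  have "frechet_derivative f (at x) 1 = vector_derivative f (at x)" for x
    using d by (simp add: frechet_derivative_eq_vector_derivative)
  then have "curve_Ck n (\<lambda>x. vector_derivative f (at x))"
    using Suc.IH c by simp
  moreover have "\<forall>x. (f has_vector_derivative vector_derivative f (at x)) (at x)"
    using d vector_derivative_works by blast
  ultimately show ?case by auto
qed

lemma smooth_map_imp_smooth_curve: "smooth_map f \<Longrightarrow> smooth_curve f"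
  unfolding smooth_map_def smooth_curve_def using Ck_imp_curve_Ck by blast

lemma curve_Ck_imp_Ck_snd:
  fixes g :: "real \<Rightarrow> 'a::real_normed_vector"
  shows "curve_Ck n g \<Longrightarrow> Ck n (\<lambda>p::real \<times> real. c *\<^sub>R g (snd p))"
proof (induction n arbitrary: g c)
  case 0
  then show ?case
    by (auto intro!: continuous_intros intro: continuous_on_compose2[of UNIV g])
next
  case (Suc n)
  then obtain g' where g': "\<forall>x. (g has_vector_derivative g' x) (at x)" "curve_Ck n g'" by auto
  have deriv: "((\<lambda>p::real \<times> real. c *\<^sub>R g (snd p)) has_derivative
      (\<lambda>v. (c * snd v) *\<^sub>R g' (snd p))) (at p)" for p
  proof -
    have "(g has_derivative (\<lambda>h. h *\<^sub>R g' (snd p))) (at (snd p))"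
      using g' by (simp add: has_vector_derivative_def)
    then have "((\<lambda>p. g (snd p)) has_derivative (\<lambda>v. snd v *\<^sub>R g' (snd p))) (at p)"
      using has_derivative_compose[OF has_derivative_snd[OF has_derivative_ident]] by blast
    from has_derivative_scaleR_right[OF this, of c] show ?thesis by simp
  qed
  then have "frechet_derivative (\<lambda>p::real \<times> real. c *\<^sub>R g (snd p)) (at p) =
      (\<lambda>v. (c * snd v) *\<^sub>R g' (snd p))" for p
    by (metis frechet_derivative_at)
  moreover have "\<forall>p. (\<lambda>p::real \<times> real. c *\<^sub>R g (snd p)) differentiable (at p)"
    using deriv differentiable_def by blast
  ultimately show ?case
    using Suc.IH g' by simp
qed

lemma smooth_curve_imp_smooth_map_snd:
  "smooth_curve g \<Longrightarrow> smooth_map (\<lambda>p::real \<times> real. g (snd p))"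
  using curve_Ck_imp_Ck_snd[where c = 1] unfolding smooth_curve_def smooth_map_def by auto

section \<open>The induced metric of a twisted torus\<close>

lemma inner_mult_cis: "(a * cis t) \<bullet> (b * cis t) = a \<bullet> b"
proof -
  have cos_sq: "cos t * cos t = 1 - sin t * sin t"
    using sin_cos_squared_add3[of t] by linarith
  show ?thesis by (simp add: inner_complex_def algebra_simps cos_sq)
qed

lemma twisted_torus_has_derivative:
  assumes "\<And>b. (\<Gamma> has_vector_derivative \<Gamma>' b) (at b)"
  shows "(twisted_torus \<Gamma> has_derivative (\<lambda>v. (1 / sqrt 2) *\<^sub>R
     (\<Gamma> (snd p) * (fst v *\<^sub>R (\<i> * cis (fst p))) + (snd v *\<^sub>R \<Gamma>' (snd p)) * cis (fst p),
      \<Gamma> (snd p) * ((- fst v) *\<^sub>R (\<i> * cis (- fst p))) + (snd v *\<^sub>R \<Gamma>' (snd p)) * cis (- fst p)))) (at p)"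
proof -
  have "(\<Gamma> has_derivative (\<lambda>h. h *\<^sub>R \<Gamma>' (snd p))) (at (snd p))"
    using assms by (simp add: has_vector_derivative_def)
  then have "((\<lambda>p. \<Gamma> (snd p)) has_derivative (\<lambda>v. snd v *\<^sub>R \<Gamma>' (snd p))) (at p)"
    using has_derivative_compose[OF has_derivative_snd[OF has_derivative_ident]] by blast
  moreover have "((\<lambda>p. cis (fst p)) has_derivative (\<lambda>v. fst v *\<^sub>R (\<i> * cis (fst p)))) (at p)"
    and "((\<lambda>p. cis (- fst p)) has_derivative (\<lambda>v. (- fst v) *\<^sub>R (\<i> * cis (- fst p)))) (at p)"
    by (auto intro!: derivative_eq_intros)
  ultimately show ?thesis
    unfolding twisted_torus_def[abs_def]
    by (intro has_derivative_scaleR_right has_derivative_Pair has_derivative_mult)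
qed

context
  fixes \<Gamma> \<Gamma>' :: "real \<Rightarrow> complex"
  assumes deriv: "\<And>b. (\<Gamma> has_vector_derivative \<Gamma>' b) (at b)"
begin

lemma pd1_twisted_torus:
  "pd1 (twisted_torus \<Gamma>) p =
     (1 / sqrt 2) *\<^sub>R (\<i> * \<Gamma> (snd p) * cis (fst p), - (\<i> * \<Gamma> (snd p) * cis (- fst p)))"
  unfolding pd1_def frechet_derivative_at[OF twisted_torus_has_derivative[OF deriv], symmetric]
  by (simp add: algebra_simps)

lemma pd2_twisted_torus:
  "pd2 (twisted_torus \<Gamma>) p = (1 / sqrt 2) *\<^sub>R (\<Gamma>' (snd p) * cis (fst p), \<Gamma>' (snd p) * cis (- fst p))"
  unfolding pd2_def frechet_derivative_at[OF twisted_torus_has_derivative[OF deriv], symmetric]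
  by simp

lemma gE_twisted_torus: "gE (twisted_torus \<Gamma>) p = (cmod (\<Gamma> (snd p)))\<^sup>2"
proof -
  have "gE (twisted_torus \<Gamma>) p = (\<i> * \<Gamma> (snd p)) \<bullet> (\<i> * \<Gamma> (snd p))"
    unfolding gE_def pd1_twisted_torus using inner_mult_cis[of "\<i> * \<Gamma> (snd p)"]
    by (simp add: mult.assoc[symmetric])
  then show ?thesis
    by (simp add: power2_norm_eq_inner[symmetric] norm_mult)
qed

lemma gG_twisted_torus: "gG (twisted_torus \<Gamma>) p = (cmod (\<Gamma>' (snd p)))\<^sup>2"
  unfolding gG_def pd2_twisted_torus using inner_mult_cis[of "\<Gamma>' (snd p)"]
  by (simp add: power2_norm_eq_inner)

lemma gM_twisted_torus: "gM (twisted_torus \<Gamma>) p = 0"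
  unfolding gM_def pd1_twisted_torus pd2_twisted_torus
  using inner_mult_cis[of "\<i> * \<Gamma> (snd p)"] inner_mult_cis[of "- \<i> * \<Gamma> (snd p)"]
  by (simp add: mult.assoc[symmetric])

lemma torus_area_twisted_torus:
  assumes "continuous_on UNIV \<Gamma>'"
  shows "torus_area (twisted_torus \<Gamma>) = 2 * pi * integral {0..2*pi} (\<lambda>b. cmod (\<Gamma> b) * cmod (\<Gamma>' b))"
proof -
  have "continuous_on UNIV \<Gamma>"
    using deriv by (meson continuous_at_imp_continuous_on has_vector_derivative_continuous)
  then have "continuous_on UNIV (\<lambda>b. cmod (\<Gamma> b) * cmod (\<Gamma>' b))"
    using assms by (intro continuous_intros)
  then have "continuous_on (cbox (0, 0) (2 * pi, 2 * pi))
      (\<lambda>p::real \<times> real. cmod (\<Gamma> (snd p)) * cmod (\<Gamma>' (snd p)))"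
    by (rule continuous_on_compose2) (auto intro: continuous_intros)
  from integral_prod_continuous[OF this] show ?thesis
    unfolding torus_area_def gE_twisted_torus gG_twisted_torus gM_twisted_torus
    by (simp add: real_sqrt_mult cbox_interval)
qed

end

section \<open>First variation of the area\<close>

lemma has_real_derivative_cmod:
  fixes f :: "real \<Rightarrow> complex"
  assumes "(f has_vector_derivative f') (at x within S)" and "f x \<noteq> 0"
  shows "((\<lambda>x. cmod (f x)) has_real_derivative Re (cnj (f x) * f') / cmod (f x)) (at x within S)"
proof -
  have "(f has_derivative (\<lambda>h. h *\<^sub>R f')) (at x within S)"
    using assms(1) by (simp add: has_vector_derivative_def)
  from has_derivative_compose[OF this has_derivative_norm[OF assms(2)]]
  have "((\<lambda>x. cmod (f x)) has_derivative (\<lambda>h. (h *\<^sub>R f') \<bullet> sgn (f x))) (at x within S)" .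
  moreover have "(\<lambda>h. (h *\<^sub>R f') \<bullet> sgn (f x)) = (*) (Re (cnj (f x) * f') / cmod (f x))"
    by (auto simp: inner_complex_def sgn_div_norm algebra_simps divide_inverse)
  ultimately show ?thesis
    by (simp add: has_field_derivative_def)
qed

lemma has_real_derivative_Re_div_cmod:
  fixes w :: "real \<Rightarrow> complex"
  assumes "(w has_vector_derivative w') (at x)" and "w x \<noteq> 0"
  shows "((\<lambda>x. Re (w x) / cmod (w x)) has_real_derivative
           - Im (w x) * Im (cnj (w x) * w') / cmod (w x) ^ 3) (at x)"
proof -
  have "((\<lambda>x. Re (w x)) has_real_derivative Re w') (at x)"
    using bounded_linear.has_vector_derivative[OF bounded_linear_Re assms(1)]
    by (simp add: has_real_derivative_iff_has_vector_derivative)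
  from DERIV_divide[OF this has_real_derivative_cmod[OF assms]]
  have "((\<lambda>x. Re (w x) / cmod (w x)) has_real_derivative
      (Re w' * cmod (w x) - Re (w x) * (Re (cnj (w x) * w') / cmod (w x))) / (cmod (w x))\<^sup>2) (at x)"
    using assms(2) by (simp add: power2_eq_square)
  moreover have "(Re w' * cmod (w x) - Re (w x) * (Re (cnj (w x) * w') / cmod (w x))) / (cmod (w x))\<^sup>2
      = - Im (w x) * Im (cnj (w x) * w') / cmod (w x) ^ 3"
  proof -
    have "(cmod (w x))\<^sup>2 = (Re (w x))\<^sup>2 + (Im (w x))\<^sup>2"
      by (simp add: cmod_power2)
    then show ?thesis
      using assms(2) by (simp add: field_simps power2_eq_square power3_eq_cube)
  qed
  ultimately show ?thesis by simp
qed

lemma nonzero_under_small_perturbation: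
  fixes f g :: "real \<Rightarrow> complex"
  assumes "compact K" and "continuous_on K f" and "continuous_on K g"
    and "\<And>x. x \<in> K \<Longrightarrow> f x \<noteq> 0"
  obtains d where "d > 0" and "\<And>t x. \<bar>t\<bar> < d \<Longrightarrow> x \<in> K \<Longrightarrow> f x + of_real t * g x \<noteq> 0"
proof (cases "K = {}")
  case True
  then show ?thesis using that[of 1] by simp
next
  case False
  obtain x0 where x0: "x0 \<in> K" and min: "\<And>y. y \<in> K \<Longrightarrow> cmod (f x0) \<le> cmod (f y)"
    using continuous_attains_inf[OF assms(1) False continuous_on_norm[OF assms(2)]] by auto
  obtain B where B: "B > 0" and bound: "\<And>x. x \<in> K \<Longrightarrow> cmod (g x) \<le> B"
    using compact_imp_bounded[OF compact_continuous_image[OF assms(3,1)]]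
    unfolding bounded_pos by auto
  show ?thesis
  proof (rule that)
    show "cmod (f x0) / B > 0"
      using assms(4)[OF x0] B by simp
    fix t x assume t: "\<bar>t\<bar> < cmod (f x0) / B" and x: "x \<in> K"
    have "cmod (of_real t * g x) \<le> \<bar>t\<bar> * B"
      using bound[OF x] by (simp add: norm_mult mult_left_mono)
    also have "\<dots> < cmod (f x)"
      using t B min[OF x] by (simp add: field_simps)
    finally show "f x + of_real t * g x \<noteq> 0"
      by (metis add.inverse_unique norm_minus_cancel order.irrefl)
  qed
qed

lemma has_real_derivative_integral_cmod_mult:
  fixes f g v w :: "real \<Rightarrow> complex"
  assumes "continuous_on {a..b} f" "continuous_on {a..b} g"
    and "continuous_on {a..b} v" "continuous_on {a..b} w"
    and "\<And>x. x \<in> {a..b} \<Longrightarrow> f x \<noteq> 0" "\<And>x. x \<in> {a..b} \<Longrightarrow> g x \<noteq> 0"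
  shows "((\<lambda>t. integral {a..b} (\<lambda>x. cmod (f x + of_real t * v x) * cmod (g x + of_real t * w x)))
    has_real_derivative integral {a..b} (\<lambda>x. cmod (f x) * (Re (cnj (g x) * w x) / cmod (g x))
                                          + Re (cnj (f x) * v x) / cmod (f x) * cmod (g x))) (at 0)"
proof -
  obtain d1 where "d1 > 0" and nz1: "\<And>t x. \<bar>t\<bar> < d1 \<Longrightarrow> x \<in> {a..b} \<Longrightarrow> f x + of_real t * v x \<noteq> 0"
    using nonzero_under_small_perturbation[OF _ assms(1,3,5)] by blast
  obtain d2 where "d2 > 0" and nz2: "\<And>t x. \<bar>t\<bar> < d2 \<Longrightarrow> x \<in> {a..b} \<Longrightarrow> g x + of_real t * w x \<noteq> 0"
    using nonzero_under_small_perturbation[OF _ assms(2,4,6)] by blast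
  define U where "U = ball (0::real) (min d1 d2)"
  have nz: "f x + of_real t * v x \<noteq> 0" "g x + of_real t * w x \<noteq> 0" if "t \<in> U" "x \<in> {a..b}" for t x
    using that nz1 nz2 by (auto simp: U_def)
  define F' where "F' t x = cmod (f x + of_real t * v x)
      * (Re (cnj (g x + of_real t * w x) * w x) / cmod (g x + of_real t * w x))
      + Re (cnj (f x + of_real t * v x) * v x) / cmod (f x + of_real t * v x)
      * cmod (g x + of_real t * w x)" for t x
  have "((\<lambda>t. cmod (f x + of_real t * v x) * cmod (g x + of_real t * w x)) has_field_derivative F' t x)
      (at t within U)" if "t \<in> U" "x \<in> {a..b}" for t x
    unfolding F'_def using nz[OF that]
    by (intro DERIV_mult' has_real_derivative_cmod) (auto intro!: derivative_eq_intros)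
  moreover have "continuous_on (U \<times> {a..b}) (\<lambda>(t, x). F' t x)"
  proof -
    have "continuous_on (U \<times> {a..b}) (\<lambda>z. F' (fst z) (snd z))"
      unfolding F'_def using nz
      by (intro continuous_intros continuous_on_compose2[OF assms(1)] continuous_on_compose2[OF assms(2)]
          continuous_on_compose2[OF assms(3)] continuous_on_compose2[OF assms(4)])
         (auto simp: mem_Times_iff)
    then show ?thesis by (simp add: case_prod_beta')
  qed
  ultimately have "((\<lambda>t. integral (cbox a b) (\<lambda>x. cmod (f x + of_real t * v x) * cmod (g x + of_real t * w x)))
      has_field_derivative integral (cbox a b) (F' 0)) (at 0 within U)"
    using assms by (intro leibniz_rule_field_derivative)
      (auto simp: U_def \<open>d1 > 0\<close> \<open>d2 > 0\<close> cbox_interval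
        intro!: integrable_continuous_interval continuous_intros)
  moreover have "at 0 within U = at 0"
    using \<open>d1 > 0\<close> \<open>d2 > 0\<close> by (intro at_within_open) (auto simp: U_def)
  moreover have "F' 0 = (\<lambda>x. cmod (f x) * (Re (cnj (g x) * w x) / cmod (g x))
                                          + Re (cnj (f x) * v x) / cmod (f x) * cmod (g x))"
    unfolding F'_def by simp
  ultimately show ?thesis
    by (simp add: cbox_interval)
qed

(* Pointwise form of c' = D + 2 g: for w = cnj gamma gamma' the left side is the derivative of
   Re w / |w|, and the right side is the first-variation density D once Re (cnj gamma' V') has been
   replaced by - Re (cnj gamma'' V). *)
lemma first_variation_angle_identity:
  fixes z z' z'' :: complex
  assumes "z \<noteq> 0" and "z' \<noteq> 0"
  defines "V \<equiv> \<i> * of_real (Im (z' / z)) / cnj z'"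
    and "w \<equiv> cnj z * z'" and "w' \<equiv> cnj z' * z' + cnj z * z''"
  shows "- Im w * Im (cnj w * w') / cmod w ^ 3 =
      cmod z * (- Re (cnj z'' * V) / cmod z') + Re (cnj z * V) / cmod z * cmod z'
      + 2 * ((Im w)\<^sup>2 / (cmod z ^ 3 * cmod z'))"
proof -
  define R S J K where "R = cmod z" and "S = cmod z'" and "J = Im w" and "K = Im (cnj z' * z'')"
  have "R > 0" "S > 0"
    using assms(1,2) by (auto simp: R_def S_def)
  have "z' / z = w / of_real (R\<^sup>2)"
    using assms(1) unfolding w_def R_def complex_norm_square by (simp add: field_simps)
  then have "V = \<i> * of_real (J / R\<^sup>2) * (1 / cnj z')"
    unfolding V_def J_def by simp
  also have "1 / cnj z' = z' / of_real (S\<^sup>2)"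
    using assms(2) unfolding S_def complex_norm_square by (simp add: field_simps)
  finally have V: "V = of_real (J / (R\<^sup>2 * S\<^sup>2)) * (\<i> * z')"
    by (simp add: field_simps)
  have "cnj z * V = of_real (J / (R\<^sup>2 * S\<^sup>2)) * (\<i> * w)"
    unfolding V w_def by (simp add: algebra_simps)
  then have Re_zV: "Re (cnj z * V) = - J\<^sup>2 / (R\<^sup>2 * S\<^sup>2)"
    unfolding J_def by (simp add: power2_eq_square)
  have Re_z''V: "Re (cnj z'' * V) = J * K / (R\<^sup>2 * S\<^sup>2)"
    unfolding V K_def by (simp add: algebra_simps)
  have Im_ww': "Im (cnj w * w') = R\<^sup>2 * K - S\<^sup>2 * J"
    unfolding J_def K_def w_def w'_def R_def S_def cmod_power2 by (simp add: algebra_simps power2_eq_square)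
  have cmod_w: "cmod w = R * S"
    unfolding w_def R_def S_def by (simp add: norm_mult)
  show ?thesis
    unfolding Re_zV Re_z''V Im_ww' cmod_w J_def[symmetric] R_def[symmetric] S_def[symmetric]
    using \<open>R > 0\<close> \<open>S > 0\<close>
    by (simp add: field_simps power2_eq_square power3_eq_cube)
qed

section \<open>Chekanov tori\<close>

locale chekanov_curve =
  fixes \<gamma> \<gamma>' \<gamma>'' :: "real \<Rightarrow> complex" and u :: complex
  assumes smooth: "smooth_curve \<gamma>"
    and derivative: "\<And>t. (\<gamma> has_vector_derivative \<gamma>' t) (at t)"
    and derivative2: "\<And>t. (\<gamma>' has_vector_derivative \<gamma>'' t) (at t)"
    and periodic: "\<And>t. \<gamma> (t + 2 * pi) = \<gamma> t"
    and nonzero: "\<And>t. \<gamma> t \<noteq> 0"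
    and regular: "\<And>t. \<gamma>' t \<noteq> 0"
    and half_plane: "\<And>t. Re (\<gamma> t * cnj u) > 0"
begin

lemma smooth': "smooth_curve \<gamma>'"
  using smooth_curve_derivative[OF smooth derivative] .

lemma continuous_on_\<gamma>: "continuous_on S \<gamma>"
  using smooth_curve_continuous[OF smooth] continuous_on_subset by blast

lemma continuous_on_\<gamma>': "continuous_on S \<gamma>'"
  using smooth_curve_continuous[OF smooth'] continuous_on_subset by blast

lemma periodic': "\<gamma>' (t + 2 * pi) = \<gamma>' t"
proof -
  have "((\<lambda>s. s + 2 * pi) has_vector_derivative 1) (at t)"
    by (auto intro!: derivative_eq_intros)
  from vector_diff_chain_at[OF this derivative]
  have "(\<gamma> has_vector_derivative \<gamma>' (t + 2 * pi)) (at t)"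
    by (simp add: o_def periodic)
  then show ?thesis
    using derivative vector_derivative_unique_at by blast
qed

definition \<theta>' :: "real \<Rightarrow> real" where
  "\<theta>' t = Im (\<gamma>' t / \<gamma> t)"

(* A branch of arg gamma - arg u; it is smooth because gamma * cnj u stays in the right half-plane,
   where Ln is holomorphic. *)
definition \<theta> :: "real \<Rightarrow> real" where
  "\<theta> t = Im (Ln (\<gamma> t * cnj u))"

lemma \<theta>_has_real_derivative: "(\<theta> has_real_derivative \<theta>' t) (at t)"
proof -
  have "\<gamma> t * cnj u \<notin> \<real>\<^sub>\<le>\<^sub>0"
    using half_plane[of t] by (auto simp: complex_nonpos_Reals_iff)
  moreover have "((\<lambda>s. \<gamma> s * cnj u) has_vector_derivative \<gamma>' t * cnj u) (at t)"
    using derivative by (auto intro!: derivative_eq_intros)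
  ultimately have "((\<lambda>s. Ln (\<gamma> s * cnj u)) has_vector_derivative \<gamma>' t * cnj u / (\<gamma> t * cnj u)) (at t)"
    using field_vector_diff_chain_at has_field_derivative_Ln by (fastforce simp: o_def divide_inverse)
  moreover have "\<gamma>' t * cnj u / (\<gamma> t * cnj u) = \<gamma>' t / \<gamma> t"
    using half_plane[of t] by auto
  ultimately have "(\<theta> has_vector_derivative \<theta>' t) (at t)"
    unfolding \<theta>_def[abs_def] \<theta>'_def using bounded_linear.has_vector_derivative[OF bounded_linear_Im]
    by metis
  then show ?thesis
    by (simp add: has_real_derivative_iff_has_vector_derivative)
qed

lemma smooth_\<theta>': "smooth_curve \<theta>'"
  unfolding \<theta>'_def[abs_def] divide_inverse
  using smooth_curve_linear[OF bounded_linear_Im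
      smooth_curve_mult[OF smooth' smooth_curve_inverse[OF nonzero smooth]]] .

lemma smooth_\<theta>: "smooth_curve \<theta>"
  using smooth_curve_antiderivative[OF _ smooth_\<theta>'] \<theta>_has_real_derivative
  by (simp add: has_real_derivative_iff_has_vector_derivative)

definition hamiltonian :: "real \<times> real \<Rightarrow> real" where
  "hamiltonian p = \<theta> (snd p)"

lemma smooth_map_hamiltonian: "smooth_map hamiltonian"
  unfolding hamiltonian_def[abs_def] using smooth_curve_imp_smooth_map_snd[OF smooth_\<theta>] .

lemma periodic2_hamiltonian: "periodic2 hamiltonian"
  unfolding periodic2_def hamiltonian_def \<theta>_def by (simp add: periodic)

lemma pd_hamiltonian: "pd1 hamiltonian p = 0" "pd2 hamiltonian p = \<theta>' (snd p)"
proof -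
  have "(\<theta> has_derivative (\<lambda>h. h *\<^sub>R \<theta>' (snd p))) (at (snd p))"
    using \<theta>_has_real_derivative[of "snd p"]
    by (simp add: has_real_derivative_iff_has_vector_derivative has_vector_derivative_def)
  then have d: "(hamiltonian has_derivative (\<lambda>v. snd v *\<^sub>R \<theta>' (snd p))) (at p)"
    unfolding hamiltonian_def[abs_def]
    using has_derivative_compose[OF has_derivative_snd[OF has_derivative_ident]] by blast
  show "pd1 hamiltonian p = 0" "pd2 hamiltonian p = \<theta>' (snd p)"
    unfolding pd1_def pd2_def frechet_derivative_at[OF d, symmetric] by simp_all
qed

definition V :: "real \<Rightarrow> complex" where
  "V t = \<i> * of_real (\<theta>' t) / cnj (\<gamma>' t)"

lemma smooth_V: "smooth_curve V"
proof -
  have "smooth_curve (\<lambda>t. inverse (cnj (\<gamma>' t)))"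
    using smooth_curve_inverse[OF _ smooth_curve_linear[OF bounded_linear_cnj smooth']] regular
    by simp
  then show ?thesis
    unfolding V_def[abs_def] divide_inverse
    using smooth_curve_mult[OF smooth_curve_mult[OF smooth_curve_const
        smooth_curve_linear[OF bounded_linear_of_real smooth_\<theta>']]]
    by blast
qed

definition V' :: "real \<Rightarrow> complex" where
  "V' t = vector_derivative V (at t)"

lemma V_derivative: "(V has_vector_derivative V' t) (at t)" and smooth_V': "smooth_curve V'"
proof -
  obtain f where f: "\<And>t. (V has_vector_derivative f t) (at t)" "smooth_curve f"
    using smooth_curve_has_derivative[OF smooth_V] by blast
  then have "V' = f"
    unfolding V'_def by (auto intro!: vector_derivative_at)
  then show "(V has_vector_derivative V' t) (at t)" "smooth_curve V'"
    using f by auto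
qed

lemma continuous_on_V: "continuous_on S V"
  using smooth_curve_continuous[OF smooth_V] continuous_on_subset by blast

lemma continuous_on_V': "continuous_on S V'"
  using smooth_curve_continuous[OF smooth_V'] continuous_on_subset by blast

lemma grad_push_hamiltonian:
  "grad_push (twisted_torus \<gamma>) hamiltonian p =
     (\<theta>' (snd p) / (cmod (\<gamma>' (snd p)))\<^sup>2) *\<^sub>R pd2 (twisted_torus \<gamma>) p"
  using nonzero[of "snd p"]
  unfolding grad_push_def Let_def pd_hamiltonian gE_twisted_torus[OF derivative]
    gG_twisted_torus[OF derivative] gM_twisted_torus[OF derivative]
  by (simp add: field_simps)

lemma hamiltonian_variation:
  "(\<lambda>p. twisted_torus \<gamma> p + t *\<^sub>R cJ (grad_push (twisted_torus \<gamma>) hamiltonian p)) =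
     twisted_torus (\<lambda>b. \<gamma> b + of_real t * V b)"
proof
  fix p :: "real \<times> real"
  obtain a b where p: "p = (a, b)" by (cases p)
  have "V b = \<i> * of_real (\<theta>' b) * \<gamma>' b / (of_real (cmod (\<gamma>' b)))\<^sup>2"
    using regular[of b] unfolding V_def
    by (simp add: field_simps) (metis complex_norm_square of_real_power)
  then have "cJ (grad_push (twisted_torus \<gamma>) hamiltonian p) =
      (1 / sqrt 2) *\<^sub>R (V b * cis a, V b * cis (- a))"
    unfolding grad_push_hamiltonian pd2_twisted_torus[OF derivative] cJ_def p
    by (simp add: scaleR_conv_of_real field_simps)
  then show "twisted_torus \<gamma> p + t *\<^sub>R cJ (grad_push (twisted_torus \<gamma>) hamiltonian p) =
      twisted_torus (\<lambda>b. \<gamma> b + of_real t * V b) p"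
    unfolding twisted_torus_def p by (simp add: scaleR_conv_of_real algebra_simps)
qed

definition area_variation_density :: "real \<Rightarrow> real" where
  "area_variation_density b = cmod (\<gamma> b) * (Re (cnj (\<gamma>' b) * V' b) / cmod (\<gamma>' b))
     + Re (cnj (\<gamma> b) * V b) / cmod (\<gamma> b) * cmod (\<gamma>' b)"

lemma area_variation_has_derivative:
  "((\<lambda>t. torus_area (\<lambda>p. twisted_torus \<gamma> p + t *\<^sub>R cJ (grad_push (twisted_torus \<gamma>) hamiltonian p)))
     has_real_derivative 2 * pi * integral {0..2*pi} area_variation_density) (at 0)"
proof -
  have "torus_area (\<lambda>p. twisted_torus \<gamma> p + t *\<^sub>R cJ (grad_push (twisted_torus \<gamma>) hamiltonian p)) =
      2 * pi * integral {0..2*pi} (\<lambda>b. cmod (\<gamma> b + of_real t * V b) * cmod (\<gamma>' b + of_real t * V' b))"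
    for t
    unfolding hamiltonian_variation
    using derivative V_derivative continuous_on_\<gamma>' continuous_on_V'
    by (intro torus_area_twisted_torus) (auto intro!: derivative_eq_intros continuous_intros)
  moreover have "((\<lambda>t. integral {0..2*pi} (\<lambda>b. cmod (\<gamma> b + of_real t * V b) * cmod (\<gamma>' b + of_real t * V' b)))
      has_real_derivative integral {0..2*pi} area_variation_density) (at 0)"
    unfolding area_variation_density_def[abs_def]
    using continuous_on_\<gamma> continuous_on_\<gamma>' continuous_on_V continuous_on_V' nonzero regular
    by (intro has_real_derivative_integral_cmod_mult) auto
  ultimately show ?thesis
    using DERIV_cmult by fastforce
qed

lemma Re_cnj_\<gamma>'_V': "Re (cnj (\<gamma>' t) * V' t) = - Re (cnj (\<gamma>'' t) * V t)"
proof -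
  have "Re (cnj (\<gamma>' s) * V s) = 0" for s
    using regular[of s] unfolding V_def by (simp add: field_simps)
  then have "((\<lambda>s. Re (cnj (\<gamma>' s) * V s)) has_vector_derivative 0) (at t)"
    by simp
  moreover have "((\<lambda>s. Re (cnj (\<gamma>' s) * V s)) has_vector_derivative
      Re (cnj (\<gamma>' t) * V' t + cnj (\<gamma>'' t) * V t)) (at t)"
    by (intro bounded_linear.has_vector_derivative[OF bounded_linear_Re] has_vector_derivative_mult
        has_vector_derivative_cnj derivative2 V_derivative)
  ultimately show ?thesis
    using vector_derivative_unique_at by fastforce
qed

definition cos_angle :: "real \<Rightarrow> real" where
  "cos_angle b = Re (cnj (\<gamma> b) * \<gamma>' b) / cmod (cnj (\<gamma> b) * \<gamma>' b)"

definition angular_term :: "real \<Rightarrow> real" where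
  "angular_term b = (Im (cnj (\<gamma> b) * \<gamma>' b))\<^sup>2 / (cmod (\<gamma> b) ^ 3 * cmod (\<gamma>' b))"

lemma cos_angle_has_real_derivative:
  "(cos_angle has_real_derivative area_variation_density b + 2 * angular_term b) (at b)"
proof -
  have "((\<lambda>b. cnj (\<gamma> b) * \<gamma>' b) has_vector_derivative cnj (\<gamma>' b) * \<gamma>' b + cnj (\<gamma> b) * \<gamma>'' b) (at b)"
    using has_vector_derivative_mult[OF has_vector_derivative_cnj[OF derivative] derivative2]
    by (simp add: add.commute)
  from has_real_derivative_Re_div_cmod[OF this]
  show ?thesis
    unfolding cos_angle_def[abs_def] area_variation_density_def angular_term_def Re_cnj_\<gamma>'_V'
      V_def \<theta>'_def first_variation_angle_identity[OF nonzero regular]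
    using nonzero regular by simp
qed

lemma continuous_on_angular_term: "continuous_on S angular_term"
  unfolding angular_term_def[abs_def]
  using continuous_on_\<gamma> continuous_on_\<gamma>' nonzero regular by (intro continuous_intros) auto

lemma integral_area_variation_density:
  "integral {0..2*pi} area_variation_density = - 2 * integral {0..2*pi} angular_term"
proof -
  have "((\<lambda>b. area_variation_density b + 2 * angular_term b) has_integral
      cos_angle (2 * pi) - cos_angle 0) {0..2*pi}"
    by (rule fundamental_theorem_of_calculus)
      (auto simp: has_real_derivative_iff_has_vector_derivative[symmetric]
        intro!: has_field_derivative_at_within cos_angle_has_real_derivative)
  moreover have "cos_angle (2 * pi) = cos_angle 0"
    unfolding cos_angle_def using periodic[of 0] periodic'[of 0] by simp
  ultimately have "((\<lambda>b. area_variation_density b + 2 * angular_term b) has_integral 0) {0..2*pi}"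
    by simp
  moreover have "((\<lambda>b. 2 * angular_term b) has_integral 2 * integral {0..2*pi} angular_term) {0..2*pi}"
    using continuous_on_angular_term
    by (intro has_integral_mult_right integrable_integral integrable_continuous_interval)
  ultimately have "((\<lambda>b. (area_variation_density b + 2 * angular_term b) - 2 * angular_term b)
      has_integral 0 - 2 * integral {0..2*pi} angular_term) {0..2*pi}"
    by (rule has_integral_diff)
  then show ?thesis
    by (simp add: integral_unique)
qed

lemma angular_term_pos: "\<exists>b \<in> {0..2*pi}. angular_term b > 0"
proof -
  have d: "((\<lambda>b. cmod (\<gamma> b)) has_real_derivative Re (cnj (\<gamma> b) * \<gamma>' b) / cmod (\<gamma> b)) (at b)" for b
    using has_real_derivative_cmod[OF derivative nonzero] .
  have "continuous_on {0..2*pi} (\<lambda>b. cmod (\<gamma> b))"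
    using continuous_on_\<gamma> by (intro continuous_intros)
  moreover have "(\<lambda>b. cmod (\<gamma> b)) differentiable (at b)" for b
    using d real_differentiable_def by blast
  ultimately obtain b where b: "0 < b" "b < 2 * pi"
    and crit: "((\<lambda>b. cmod (\<gamma> b)) has_real_derivative 0) (at b)"
    using Rolle[of 0 "2 * pi" "\<lambda>b. cmod (\<gamma> b)"] periodic[of 0] by auto
  have "Re (cnj (\<gamma> b) * \<gamma>' b) = 0"
    using DERIV_unique[OF d[of b] crit] nonzero[of b] by simp
  moreover have "cnj (\<gamma> b) * \<gamma>' b \<noteq> 0"
    using nonzero regular by simp
  ultimately have "Im (cnj (\<gamma> b) * \<gamma>' b) \<noteq> 0"
    using complex_eq_iff by force
  then have "angular_term b > 0"
    unfolding angular_term_def using nonzero regular by simp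
  then show ?thesis
    using b by auto
qed

lemma integral_angular_term_pos: "integral {0..2*pi} angular_term > 0"
proof -
  have nonneg: "angular_term b \<ge> 0" for b
    unfolding angular_term_def by simp
  then have "integral {0..2*pi} angular_term \<ge> 0"
    using continuous_on_angular_term by (intro integral_nonneg integrable_continuous_interval) auto
  moreover have "integral {0..2*pi} angular_term \<noteq> 0"
    using integral_eq_0_iff[OF continuous_on_angular_term _ nonneg, of 0 "2 * pi"] angular_term_pos
    by fastforce
  ultimately show ?thesis
    by simp
qed

lemma not_hamiltonian_stationary: "\<not> hamiltonian_stationary (twisted_torus \<gamma>)"
proof
  assume "hamiltonian_stationary (twisted_torus \<gamma>)"
  then have "((\<lambda>t. torus_area (\<lambda>p. twisted_torus \<gamma> p
      + t *\<^sub>R cJ (grad_push (twisted_torus \<gamma>) hamiltonian p))) has_real_derivative 0) (at 0)"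
    unfolding hamiltonian_stationary_def using smooth_map_hamiltonian periodic2_hamiltonian by blast
  then have "2 * pi * integral {0..2*pi} area_variation_density = 0"
    using DERIV_unique[OF area_variation_has_derivative] by blast
  then show False
    using integral_angular_term_pos unfolding integral_area_variation_density by simp
qed

end

theorem mainTheorem2:
  fixes \<gamma> :: "real \<Rightarrow> complex"
  assumes "smooth_regular_simple_closed_curve \<gamma>"
      and "in_open_half_plane \<gamma>"
  shows "\<not> hamiltonian_stationary (twisted_torus \<gamma>)"
proof -
  have smooth: "smooth_curve \<gamma>"
    using assms(1) smooth_map_imp_smooth_curve unfolding smooth_regular_simple_closed_curve_def
    by blast
  obtain \<gamma>' where \<gamma>': "\<And>t. (\<gamma> has_vector_derivative \<gamma>' t) (at t)" and "smooth_curve \<gamma>'"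
    using smooth_curve_has_derivative[OF smooth] by blast
  obtain \<gamma>'' where "\<And>t. (\<gamma>' has_vector_derivative \<gamma>'' t) (at t)"
    using smooth_curve_has_derivative[OF \<open>smooth_curve \<gamma>'\<close>] by blast
  moreover have "\<gamma>' t \<noteq> 0" for t
    using assms(1) vector_derivative_at[OF \<gamma>'] unfolding smooth_regular_simple_closed_curve_def by metis
  moreover obtain u where "\<And>t. Re (\<gamma> t * cnj u) > 0"
    using assms(2) unfolding in_open_half_plane_def by blast
  ultimately interpret chekanov_curve \<gamma> \<gamma>' \<gamma>'' u
    using smooth \<gamma>' assms(1) unfolding smooth_regular_simple_closed_curve_def by unfold_locales auto
  show ?thesis
    by (rule not_hamiltonian_stationary)
qed

end
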